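(* Let $p$ be a prime, $t\ge1$, and let $(K_n,\alpha)$ be an edge-labeled complete graph over $\mathbb{Z}/p^t\mathbb{Z}$ whose edges carry labels $p^{i_1},\dots,p^{i_{r_n}}$ (in no particular order), with $1\le i_s<t$ for all $s$. For $1<i\le n$ let $p^{a_i}=\big[\bigcup_{k=1}^{i-1}\{(p^{(i,k)})\}\big]$. Then for each $i>1$ the vector $F^{(i)}=(f^{(i)}_{v_1},\dots,f^{(i)}_{v_n})$ defined by $f^{(i)}_v=p^{a_i}$ if $v\in V^{(i,a_i+1)}$ and $f^{(i)}_v=0$ otherwise is an $i$-th flow-up class (with $f^{(i)}_{v_i}=p^{a_i}$). Moreover, $\operatorname{rk}[\mathbb{Z}/p^t\mathbb{Z}]_{(K_n,\alpha)}=n$.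
   Context: A spline on an edge-labeled graph $(G,\alpha)$ over $\mathbb{Z}/m\mathbb{Z}$ (edges labeled by nonzero ideals) is a vector $(f_{v_1},\dots,f_{v_n})\in(\mathbb{Z}/m\mathbb{Z})^n$ with $f_{v_i}-f_{v_j}\in\alpha(v_iv_j)$ for every edge; the splines form a $\mathbb{Z}$-module $[\mathbb{Z}/m\mathbb{Z}]_{(G,\alpha)}$ whose rank $\operatorname{rk}$ is the smallest size of a generating set. An $i$-th flow-up class is a spline with $f_{v_i}\ne0$ and $f_{v_t}=0$ for $t<i$. $K_n$ is the complete graph on $v_1,\dots,v_n$, $r_n=n(n-1)/2$; an edge labeled $p^c$ means its ideal is generated by $p^c+p^t\mathbb{Z}$. A trail is a sequence of vertices and edges in which no edge is repeated; a $v_k$-trail of $v_i$ is a trail from $v_i$ to $v_k$; $(p^{(i,k)})$ is the gcd (in $\mathbb{Z}$) of the integer labels on such a trail, $\{(p^{(i,k)})\}$ the set of these over all $v_k$-trails of $v_i$, and $[\,S\,]$ the lcm of a finite set $S$. For $1\le j\le n$ and a positive integer $b$, $V^{(j,b)}$ is the vertex set of $H^{(j,b)}$, the largest connected subgraph of $K_n$ containing $v_j$, having $v_j$ as its smallest-index vertex, all of whose edges carry labels $p^{c}$ with $b\le c<t$; i.e. the connected component of $v_j$ in the graph on $\{v_j,\dots,v_n\}$ whose edges are those edges of $K_n$ among these vertices labeled $p^c$ with $c\ge b$. *)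

theory Defs
  imports Main "HOL-Number_Theory.Number_Theory"
begin

text \<open>Vertices of K_n are the naturals 1..n (v_i is i).  An edge labeling with labels
  p^c is given by an exponent function c (c u w is the exponent of the label of edge u w).\<close>

definition valid_labeling :: "nat \<Rightarrow> nat \<Rightarrow> (nat \<Rightarrow> nat \<Rightarrow> nat) \<Rightarrow> bool" where
  "valid_labeling n t c \<longleftrightarrow>
     (\<forall>u\<in>{1..n}. \<forall>w\<in>{1..n}. u \<noteq> w \<longrightarrow> c u w = c w u \<and> 1 \<le> c u w \<and> c u w < t)"

text \<open>Elements of Z/mZ are represented by their canonical representatives in {0..<m};
  a vector in (Z/mZ)^n is a function on {1..n}, zero outside.\<close>

definition zmod_vec :: "int \<Rightarrow> nat \<Rightarrow> (nat \<Rightarrow> int) \<Rightarrow> bool" where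
  "zmod_vec m n f \<longleftrightarrow> (\<forall>v. v \<notin> {1..n} \<longrightarrow> f v = 0) \<and> (\<forall>v\<in>{1..n}. 0 \<le> f v \<and> f v < m)"

definition in_ideal_mod :: "int \<Rightarrow> int \<Rightarrow> int \<Rightarrow> bool" where
  "in_ideal_mod m g x \<longleftrightarrow> (\<exists>r::int. [x = r * g] (mod m))"

definition is_spline :: "nat \<Rightarrow> nat \<Rightarrow> nat \<Rightarrow> (nat \<Rightarrow> nat \<Rightarrow> nat) \<Rightarrow> (nat \<Rightarrow> int) \<Rightarrow> bool" where
  "is_spline p t n c f \<longleftrightarrow> zmod_vec (int p ^ t) n f \<and>
     (\<forall>u\<in>{1..n}. \<forall>w\<in>{1..n}. u \<noteq> w \<longrightarrow> in_ideal_mod (int p ^ t) (int p ^ c u w) (f u - f w))"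

definition splines :: "nat \<Rightarrow> nat \<Rightarrow> nat \<Rightarrow> (nat \<Rightarrow> nat \<Rightarrow> nat) \<Rightarrow> (nat \<Rightarrow> int) set" where
  "splines p t n c = {f. is_spline p t n c f}"

definition generates_splines :: "nat \<Rightarrow> nat \<Rightarrow> nat \<Rightarrow> (nat \<Rightarrow> nat \<Rightarrow> nat) \<Rightarrow> nat \<Rightarrow> (nat \<Rightarrow> nat \<Rightarrow> int) \<Rightarrow> bool" where
  "generates_splines p t n c k g \<longleftrightarrow>
     (\<forall>j<k. g j \<in> splines p t n c) \<and>
     (\<forall>f\<in>splines p t n c. \<exists>a::nat \<Rightarrow> int. \<forall>v\<in>{1..n}.
        [f v = (\<Sum>j<k. a j * g j v)] (mod (int p ^ t)))"

definition spline_rank :: "nat \<Rightarrow> nat \<Rightarrow> nat \<Rightarrow> (nat \<Rightarrow> nat \<Rightarrow> nat) \<Rightarrow> nat" where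
  "spline_rank p t n c = (LEAST k. \<exists>g. generates_splines p t n c k g)"

definition is_flow_up :: "nat \<Rightarrow> nat \<Rightarrow> nat \<Rightarrow> (nat \<Rightarrow> nat \<Rightarrow> nat) \<Rightarrow> nat \<Rightarrow> (nat \<Rightarrow> int) \<Rightarrow> bool" where
  "is_flow_up p t n c i f \<longleftrightarrow> is_spline p t n c f \<and>
     \<not> [f i = 0] (mod (int p ^ t)) \<and> (\<forall>s. 1 \<le> s \<and> s < i \<longrightarrow> [f s = 0] (mod (int p ^ t)))"

text \<open>Trails in K_n: vertex lists, consecutive vertices distinct (hence adjacent in K_n),
  no (undirected) edge repeated.\<close>
definition trail_edges :: "nat list \<Rightarrow> (nat \<times> nat) list" where
  "trail_edges xs = zip xs (tl xs)"

definition is_trail :: "nat \<Rightarrow> nat list \<Rightarrow> bool" where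
  "is_trail n xs \<longleftrightarrow> xs \<noteq> [] \<and> set xs \<subseteq> {1..n} \<and>
     (\<forall>(x,y)\<in>set (trail_edges xs). x \<noteq> y) \<and>
     distinct (map (\<lambda>(x,y). {x,y}) (trail_edges xs))"

definition trails_from_to :: "nat \<Rightarrow> nat \<Rightarrow> nat \<Rightarrow> nat list set" where
  "trails_from_to n i k = {xs. is_trail n xs \<and> hd xs = i \<and> last xs = k}"

definition trail_gcd :: "nat \<Rightarrow> (nat \<Rightarrow> nat \<Rightarrow> nat) \<Rightarrow> nat list \<Rightarrow> int" where
  "trail_gcd p c xs = Gcd ((\<lambda>(x,y). int p ^ c x y) ` set (trail_edges xs))"

definition lcm_trail_gcds :: "nat \<Rightarrow> nat \<Rightarrow> (nat \<Rightarrow> nat \<Rightarrow> nat) \<Rightarrow> nat \<Rightarrow> int" where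
  "lcm_trail_gcds p n c i = Lcm (\<Union>k\<in>{1..i-1}. trail_gcd p c ` trails_from_to n i k)"

definition a_exp :: "nat \<Rightarrow> nat \<Rightarrow> (nat \<Rightarrow> nat \<Rightarrow> nat) \<Rightarrow> nat \<Rightarrow> nat" where
  "a_exp p n c i = multiplicity (int p) (lcm_trail_gcds p n c i)"

text \<open>V^(j,b): component of v_j in the graph on v_j..v_n with edges labeled p^c, c \<ge> b.\<close>
definition V_set :: "nat \<Rightarrow> (nat \<Rightarrow> nat \<Rightarrow> nat) \<Rightarrow> nat \<Rightarrow> nat \<Rightarrow> nat set" where
  "V_set n c j b = {v. (\<lambda>u w. j \<le> u \<and> u \<le> n \<and> j \<le> w \<and> w \<le> n \<and> u \<noteq> w \<and> b \<le> c u w)\<^sup>*\<^sup>* j v}"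

definition F_vec :: "nat \<Rightarrow> nat \<Rightarrow> (nat \<Rightarrow> nat \<Rightarrow> nat) \<Rightarrow> nat \<Rightarrow> nat \<Rightarrow> int" where
  "F_vec p n c i v = (if v \<in> V_set n c i (a_exp p n c i + 1) then int p ^ a_exp p n c i else 0)"

end

theory Submission
  imports Defs "Jordan_Normal_Form.Determinant"
begin

(* The gcd of the labels p^c along a trail is p raised to the smallest exponent on it (its
   bottleneck), so a_i is the largest bottleneck of a trail from v_i back to an earlier vertex.
   An edge leaving the component V^(i, a_i + 1) has exponent at most a_i: towards a vertex after
   v_i this is the definition of the component, and towards an earlier vertex the edge would close
   a trail from v_i with bottleneck above a_i. Hence F^(i) is a spline, and it vanishes before v_i.
   Conversely, following a trail that realises a_i shows that every spline vanishing before v_i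
   takes a multiple of p^a_i at v_i, so the constant spline and F^(2), ..., F^(n) generate by
   triangular elimination. Fewer than n generators are impossible: writing the splines
   p^(t-1) e_v through k < n generators gives an integer n x n matrix that factors through Z^k,
   yet equals p^(t-1) times a matrix whose determinant is 1 mod p. *)

lemma Gcd_int_power_image:
  assumes "finite S" "S \<noteq> {}"
  shows "Gcd ((\<lambda>e. int p ^ e) ` S) = int p ^ Min S"
proof (rule zdvd_antisym_nonneg)
  show "Gcd ((\<lambda>e. int p ^ e) ` S) dvd int p ^ Min S"
    using Min_in[OF assms] by (intro Gcd_dvd) simp
  show "int p ^ Min S dvd Gcd ((\<lambda>e. int p ^ e) ` S)"
    using assms by (intro Gcd_greatest) (auto intro: le_imp_power_dvd)
qed auto

lemma Lcm_int_power_image: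
  assumes "finite S" "S \<noteq> {}"
  shows "Lcm ((\<lambda>e. int p ^ e) ` S) = int p ^ Max S"
proof (rule zdvd_antisym_nonneg)
  show "int p ^ Max S dvd Lcm ((\<lambda>e. int p ^ e) ` S)"
    using Max_in[OF assms] by (intro dvd_Lcm) simp
  show "Lcm ((\<lambda>e. int p ^ e) ` S) dvd int p ^ Max S"
    using assms by (intro Lcm_least) (auto intro: le_imp_power_dvd)
qed auto

lemma det_cong:
  fixes A B :: "int mat"
  assumes "A \<in> carrier_mat n n" "B \<in> carrier_mat n n"
    and "\<And>i j. i < n \<Longrightarrow> j < n \<Longrightarrow> [A $$ (i, j) = B $$ (i, j)] (mod m)"
  shows "[det A = det B] (mod m)"
  unfolding det_def'[OF assms(1)] det_def'[OF assms(2)]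
  using permutes_in_image assms(3) by (fastforce intro!: cong_sum cong_mult cong_prod)

lemma det_mult_through_smaller_dim:
  fixes A G :: "'a :: comm_ring_1 mat"
  assumes A: "A \<in> carrier_mat n k" and G: "G \<in> carrier_mat k n" and "k < n"
  shows "det (A * G) = 0"
proof -
  define A' where "A' = mat n n (\<lambda>(i, j). if j < k then A $$ (i, j) else 0)"
  define G' where "G' = mat n n (\<lambda>(i, j). if i < k then G $$ (i, j) else 0)"
  have A': "A' \<in> carrier_mat n n" and G': "G' \<in> carrier_mat n n"
    by (simp_all add: A'_def G'_def)
  have "A * G = A' * G'"
  proof (rule eq_matI)
    fix i j assume "i < dim_row (A' * G')" "j < dim_col (A' * G')"
    then have ij: "i < n" "j < n" by (simp_all add: A'_def G'_def)
    have "(A' * G') $$ (i, j) = (\<Sum>l\<in>{0..<n}. A' $$ (i, l) * G' $$ (l, j))"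
      using ij by (simp add: A'_def G'_def scalar_prod_def)
    also have "\<dots> = (\<Sum>l\<in>{0..<k}. A' $$ (i, l) * G' $$ (l, j))"
      using \<open>k < n\<close> ij by (intro sum.mono_neutral_right) (auto simp: G'_def)
    also have "\<dots> = (A * G) $$ (i, j)"
      using ij A G \<open>k < n\<close> by (simp add: A'_def G'_def scalar_prod_def)
    finally show "(A * G) $$ (i, j) = (A' * G') $$ (i, j)" ..
  qed (use A G in \<open>simp_all add: A'_def G'_def\<close>)
  moreover have "det G' = 0"
  proof -
    have "(\<Prod>i = 0..<n. G' $$ (i, \<sigma> i)) = 0" if "\<sigma> permutes {0..<n}" for \<sigma>
      using \<open>k < n\<close> permutes_in_image[OF that, of "n - 1"]
      by (intro prod_zero bexI[of _ "n - 1"]) (auto simp: G'_def)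
    then show ?thesis
      unfolding det_def'[OF G'] by simp
  qed
  ultimately show ?thesis
    by (simp add: det_mult[OF A' G'])
qed

lemma det_ne_0_if_cong_scaled_one:
  fixes B :: "int mat" and p q :: int
  assumes B: "B \<in> carrier_mat n n" and "q \<noteq> 0" "p > 1"
    and cong: "\<And>i j. i < n \<Longrightarrow> j < n \<Longrightarrow> [B $$ (i, j) = (if i = j then q else 0)] (mod q * p)"
  shows "det B \<noteq> 0"
proof -
  \<comment> \<open>B = q C with C congruent to the identity mod p, so det C is 1 mod p and thus nonzero.\<close>
  define C where "C = mat n n (\<lambda>ij. B $$ ij div q)"
  have C: "C \<in> carrier_mat n n" by (simp add: C_def)
  have entry: "B $$ (i, j) = q * C $$ (i, j)" and C_cong: "[C $$ (i, j) = (if i = j then 1 else 0)] (mod p)"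
    if "i < n" "j < n" for i j
  proof -
    have "[B $$ (i, j) = (if i = j then q else 0)] (mod q)"
      using cong[OF that] by (rule cong_dvd_modulus) simp
    then have "q dvd B $$ (i, j)"
      by (simp add: cong_dvd_iff)
    then show eq: "B $$ (i, j) = q * C $$ (i, j)" using that by (simp add: C_def)
    have "(if i = j then q else 0) = q * (if i = j then 1 else 0)" by simp
    then have "q * p dvd q * (C $$ (i, j) - (if i = j then 1 else 0))"
      using cong[OF that] unfolding eq cong_iff_dvd_diff by (simp only: right_diff_distrib)
    then show "[C $$ (i, j) = (if i = j then 1 else 0)] (mod p)"
      using \<open>q \<noteq> 0\<close> by (simp add: cong_iff_dvd_diff)
  qed
  have "[det C = det (1\<^sub>m n :: int mat)] (mod p)"
    using C by (rule det_cong) (auto simp: C_cong)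
  then have "det C \<noteq> 0"
    using \<open>p > 1\<close> by (auto simp: cong_iff_dvd_diff dest: zdvd_imp_le)
  moreover have "B = q \<cdot>\<^sub>m C"
    using B C entry by (intro eq_matI) auto
  ultimately show ?thesis
    using C \<open>q \<noteq> 0\<close> by simp
qed

lemma triangular_family_spans:
  fixes g :: "nat \<Rightarrow> nat \<Rightarrow> int" and M :: int
  assumes closed: "\<And>f r j. P f \<Longrightarrow> j < n \<Longrightarrow> P (\<lambda>v. f v - r * g j v)"
    and vanish: "\<And>j s. j < n \<Longrightarrow> 1 \<le> s \<Longrightarrow> s \<le> j \<Longrightarrow> g j s = 0"
    and lead: "\<And>f j. P f \<Longrightarrow> j < n \<Longrightarrow> \<forall>s\<in>{1..j}. M dvd f s \<Longrightarrow>
                 \<exists>r. M dvd f (Suc j) - r * g j (Suc j)"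
    and "P f"
  shows "\<exists>a. \<forall>v\<in>{1..n}. [f v = (\<Sum>j<n. a j * g j v)] (mod M)"
proof -
  \<comment> \<open>Subtracting a multiple of g j clears vertex j + 1 without disturbing vertices 1 .. j.\<close>
  have "\<forall>f. P f \<longrightarrow> (\<forall>s\<in>{1..m}. M dvd f s) \<longrightarrow>
          (\<exists>a. \<forall>v\<in>{1..n}. M dvd f v - (\<Sum>j<n. a j * g j v))" if "m \<le> n" for m
    using that
  proof (induction m rule: inc_induct)
    case base
    show ?case by (intro allI impI exI[of _ "\<lambda>_. 0"]) simp
  next
    case (step m)
    show ?case
    proof (intro allI impI)
      fix f assume f: "P f" and zero: "\<forall>s\<in>{1..m}. M dvd f s"
      obtain r where r: "M dvd f (Suc m) - r * g m (Suc m)"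
        using lead[OF f step.hyps(2) zero] by blast
      have "\<forall>s\<in>{1..Suc m}. M dvd f s - r * g m s"
        using zero r vanish[OF step.hyps(2)] by (auto simp: le_Suc_eq)
      then obtain b where b: "\<forall>v\<in>{1..n}. M dvd f v - r * g m v - (\<Sum>j<n. b j * g j v)"
        using step.IH closed[OF f step.hyps(2)] by blast
      have "(\<Sum>j<n. (b j + (if j = m then r else 0)) * g j v) =
            (\<Sum>j<n. b j * g j v + (if j = m then r * g j v else 0))" for v
        by (intro sum.cong) (auto simp: distrib_right)
      then have sum_shift: "(\<Sum>j<n. (b j + (if j = m then r else 0)) * g j v) =
                 (\<Sum>j<n. b j * g j v) + r * g m v" for v
        using step.hyps(2) by (simp add: sum.distrib)
      show "\<exists>a. \<forall>v\<in>{1..n}. M dvd f v - (\<Sum>j<n. a j * g j v)"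
        using b sum_shift by (intro exI[of _ "\<lambda>j. b j + (if j = m then r else 0)"]) (simp add: algebra_simps)
    qed
  qed
  then show ?thesis
    using \<open>P f\<close> by (fastforce simp: cong_iff_dvd_diff dvd_diff_commute)
qed

lemma trail_edges_Cons_Cons [simp]: "trail_edges (x # y # xs) = (x, y) # trail_edges (y # xs)"
  and trail_edges_singleton [simp]: "trail_edges [x] = []"
  and trail_edges_Nil [simp]: "trail_edges [] = []"
  by (simp_all add: trail_edges_def)

lemma trail_edges_snoc: "xs \<noteq> [] \<Longrightarrow> trail_edges (xs @ [w]) = trail_edges xs @ [(last xs, w)]"
  by (induction xs rule: induct_list012) auto

lemma trail_edges_append_subset: "set (trail_edges zs) \<subseteq> set (trail_edges (us @ zs))"
proof (induction us)
  case (Cons u us)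
  then show ?case by (cases "us @ zs") auto
qed simp

lemma trail_edges_memD: "(x, y) \<in> set (trail_edges xs) \<Longrightarrow> x \<in> set xs \<and> y \<in> set xs"
  by (induction xs rule: induct_list012) auto

lemma rtranclp_imp_distinct_path:
  assumes "R\<^sup>*\<^sup>* x z"
  shows "\<exists>ys. ys \<noteq> [] \<and> distinct ys \<and> hd ys = x \<and> last ys = z \<and>
           set ys \<subseteq> {y. R\<^sup>*\<^sup>* x y} \<and> (\<forall>(u, v)\<in>set (trail_edges ys). R u v)"
  using assms
proof (induction rule: converse_rtranclp_induct)
  case base
  show ?case by (intro exI[of _ "[z]"]) (simp add: trail_edges_def)
next
  case (step x y)
  then obtain ys where ys: "ys \<noteq> []" "distinct ys" "hd ys = y" "last ys = z"
    "set ys \<subseteq> {w. R\<^sup>*\<^sup>* y w}" "\<forall>(u, v)\<in>set (trail_edges ys). R u v"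
    by blast
  show ?case
  proof (cases "x \<in> set ys")
    case True
    then obtain us vs where ys_split: "ys = us @ x # vs" by (meson split_list)
    show ?thesis
      using ys ys_split step.hyps(1) trail_edges_append_subset[of "x # vs" us]
      by (intro exI[of _ "x # vs"]) (auto intro: converse_rtranclp_into_rtranclp)
  next
    case False
    then show ?thesis
      using ys step.hyps(1)
      by (intro exI[of _ "x # ys"]) (auto simp: neq_Nil_conv intro: converse_rtranclp_into_rtranclp)
  qed
qed

lemma distinct_is_trail: "distinct xs \<Longrightarrow> xs \<noteq> [] \<Longrightarrow> set xs \<subseteq> {1..n} \<Longrightarrow> is_trail n xs"
proof (induction xs rule: induct_list012)
  case (3 x y zs)
  have "{x, y} \<notin> (\<lambda>(u, v). {u, v}) ` set (trail_edges (y # zs))"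
    using "3.prems"(1) by (auto simp: doubleton_eq_iff dest: trail_edges_memD)
  then show ?case
    using 3 by (auto simp: is_trail_def)
qed (auto simp: is_trail_def)

lemma is_trail_edgeD:
  "is_trail n xs \<Longrightarrow> (x, y) \<in> set (trail_edges xs) \<Longrightarrow> x \<in> {1..n} \<and> y \<in> {1..n} \<and> x \<noteq> y"
  unfolding is_trail_def by (blast dest: trail_edges_memD)

lemma trails_from_to_edges_ne: "xs \<in> trails_from_to n i k \<Longrightarrow> i \<noteq> k \<Longrightarrow> trail_edges xs \<noteq> []"
  by (cases xs rule: remdups_adj.cases) (auto simp: trails_from_to_def is_trail_def)

definition trail_labels :: "(nat \<Rightarrow> nat \<Rightarrow> nat) \<Rightarrow> nat list \<Rightarrow> nat set" where
  "trail_labels c xs = (\<lambda>(x, y). c x y) ` set (trail_edges xs)"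

definition bottleneck :: "(nat \<Rightarrow> nat \<Rightarrow> nat) \<Rightarrow> nat list \<Rightarrow> nat" where
  "bottleneck c xs = Min (trail_labels c xs)"

lemma bottleneck_le: "(x, y) \<in> set (trail_edges xs) \<Longrightarrow> bottleneck c xs \<le> c x y"
  unfolding bottleneck_def trail_labels_def by (intro Min_le) force+

lemma le_bottleneck_iff:
  "trail_edges xs \<noteq> [] \<Longrightarrow> m \<le> bottleneck c xs \<longleftrightarrow> (\<forall>(x, y)\<in>set (trail_edges xs). m \<le> c x y)"
  unfolding bottleneck_def trail_labels_def by (subst Min_ge_iff) auto

lemma bottleneck_attained:
  "trail_edges xs \<noteq> [] \<Longrightarrow> \<exists>(x, y)\<in>set (trail_edges xs). bottleneck c xs = c x y"
  unfolding bottleneck_def trail_labels_def using Min_in[of "(\<lambda>(x, y). c x y) ` set (trail_edges xs)"]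
  by fastforce

lemma trail_gcd_eq: "trail_edges xs \<noteq> [] \<Longrightarrow> trail_gcd p c xs = int p ^ bottleneck c xs"
proof -
  assume "trail_edges xs \<noteq> []"
  moreover have "(\<lambda>(x, y). int p ^ c x y) ` set (trail_edges xs) = (\<lambda>e. int p ^ e) ` trail_labels c xs"
    unfolding trail_labels_def by (auto simp: image_image case_prod_unfold)
  ultimately show ?thesis
    unfolding trail_gcd_def bottleneck_def by (simp add: Gcd_int_power_image trail_labels_def)
qed

definition back_bottlenecks :: "nat \<Rightarrow> (nat \<Rightarrow> nat \<Rightarrow> nat) \<Rightarrow> nat \<Rightarrow> nat set" where
  "back_bottlenecks n c i = {bottleneck c xs | xs k. k \<in> {1..i-1} \<and> xs \<in> trails_from_to n i k}"

lemma in_ideal_mod_iff_dvd: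
  assumes "g dvd m"
  shows "in_ideal_mod m g x \<longleftrightarrow> g dvd x"
  unfolding in_ideal_mod_def
proof
  assume "\<exists>r. [x = r * g] (mod m)"
  then obtain r where "[x = r * g] (mod g)"
    using cong_dvd_modulus assms by blast
  then show "g dvd x"
    by (simp add: cong_dvd_iff)
next
  assume "g dvd x"
  then obtain r where "x = g * r" ..
  then show "\<exists>r. [x = r * g] (mod m)"
    by (intro exI[of _ r]) (simp add: mult.commute)
qed

definition int_spline :: "nat \<Rightarrow> nat \<Rightarrow> (nat \<Rightarrow> nat \<Rightarrow> nat) \<Rightarrow> (nat \<Rightarrow> int) \<Rightarrow> bool" where
  "int_spline p n c f \<longleftrightarrow>
     (\<forall>u\<in>{1..n}. \<forall>w\<in>{1..n}. u \<noteq> w \<longrightarrow> int p ^ c u w dvd f u - f w)"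

lemma int_spline_diff:
  assumes "int_spline p n c f" "int_spline p n c g"
  shows "int_spline p n c (\<lambda>v. f v - r * g v)"
  unfolding int_spline_def
proof (intro ballI impI)
  fix u w assume "u \<in> {1..n}" "w \<in> {1..n}" "u \<noteq> w"
  then have "int p ^ c u w dvd (f u - f w) - r * (g u - g w)"
    using assms by (simp add: int_spline_def)
  then show "int p ^ c u w dvd f u - r * g u - (f w - r * g w)"
    by (simp add: algebra_simps)
qed

lemma int_spline_dvd_along_walk:
  assumes "int_spline p n c f" "xs \<noteq> []"
    and "\<forall>(x, y)\<in>set (trail_edges xs). x \<in> {1..n} \<and> y \<in> {1..n} \<and> x \<noteq> y \<and> e \<le> c x y"
  shows "int p ^ e dvd f (hd xs) - f (last xs)"
  using assms(2,3)
proof (induction xs rule: induct_list012)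
  case (3 x y zs)
  then have "x \<in> {1..n}" "y \<in> {1..n}" "x \<noteq> y" "e \<le> c x y"
    by auto
  then have "int p ^ e dvd f x - f y"
    using assms(1) le_imp_power_dvd dvd_trans unfolding int_spline_def by blast
  moreover have "int p ^ e dvd f y - f (last (y # zs))"
    using 3 by simp
  ultimately show ?case
    using dvd_add by fastforce
qed auto

text \<open>Generator j is the flow-up class of vertex v_(j+1), matching the 0-based index of generates_splines.\<close>

definition flow_up_basis :: "nat \<Rightarrow> nat \<Rightarrow> (nat \<Rightarrow> nat \<Rightarrow> nat) \<Rightarrow> nat \<Rightarrow> nat \<Rightarrow> int" where
  "flow_up_basis p n c j v =
     (if j = 0 then (if v \<in> {1..n} then 1 else 0) else F_vec p n c (Suc j) v)"

locale labeled_complete_graph =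
  fixes p t n :: nat and c :: "nat \<Rightarrow> nat \<Rightarrow> nat"
  assumes prime: "prime p" and t_pos: "t \<ge> 1" and valid: "valid_labeling n t c"
begin

lemma p_gt_1: "p > 1"
  using prime prime_gt_1_nat by blast

lemma edge_label:
  "u \<in> {1..n} \<Longrightarrow> w \<in> {1..n} \<Longrightarrow> u \<noteq> w \<Longrightarrow> c u w = c w u \<and> 1 \<le> c u w \<and> c u w < t"
  using valid unfolding valid_labeling_def by blast

lemma label_dvd_modulus: "u \<in> {1..n} \<Longrightarrow> w \<in> {1..n} \<Longrightarrow> u \<noteq> w \<Longrightarrow> int p ^ c u w dvd int p ^ t"
  using edge_label by (simp add: le_imp_power_dvd less_imp_le)

lemma is_spline_iff: "is_spline p t n c f \<longleftrightarrow> zmod_vec (int p ^ t) n f \<and> int_spline p n c f"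
  unfolding is_spline_def int_spline_def using label_dvd_modulus in_ideal_mod_iff_dvd by blast

lemma bottleneck_less:
  assumes "xs \<in> trails_from_to n i k" "i \<noteq> k"
  shows "bottleneck c xs < t"
proof -
  obtain x y where xy: "(x, y) \<in> set (trail_edges xs)" "bottleneck c xs = c x y"
    using bottleneck_attained[OF trails_from_to_edges_ne[OF assms]] by blast
  have "x \<in> {1..n} \<and> y \<in> {1..n} \<and> x \<noteq> y"
    using assms(1) xy(1) is_trail_edgeD unfolding trails_from_to_def by blast
  then show ?thesis
    using edge_label xy(2) by simp
qed

lemma back_bottlenecks_less: "back_bottlenecks n c i \<subseteq> {..<t}"
proof
  fix e assume "e \<in> back_bottlenecks n c i"
  then obtain xs k where "e = bottleneck c xs" "k \<in> {1..i-1}" "xs \<in> trails_from_to n i k"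
    unfolding back_bottlenecks_def by blast
  moreover have "i \<noteq> k" using \<open>k \<in> {1..i-1}\<close> by auto
  ultimately show "e \<in> {..<t}" using bottleneck_less by simp
qed

lemma finite_back_bottlenecks: "finite (back_bottlenecks n c i)"
  using back_bottlenecks_less finite_subset by blast

lemma back_bottlenecks_nonempty:
  assumes i: "i \<in> {2..n}"
  shows "back_bottlenecks n c i \<noteq> {}"
proof -
  have "is_trail n [i, 1]"
    using i by (intro distinct_is_trail) auto
  then have "[i, 1] \<in> trails_from_to n i 1" "1 \<in> {1..i-1}"
    using i by (auto simp: trails_from_to_def)
  then show ?thesis
    unfolding back_bottlenecks_def by blast
qed

lemma lcm_trail_gcds_eq:
  assumes i: "i \<in> {2..n}"
  shows "lcm_trail_gcds p n c i = int p ^ Max (back_bottlenecks n c i)"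
proof -
  have "trail_gcd p c xs = int p ^ bottleneck c xs"
    if "k \<in> {1..i-1}" "xs \<in> trails_from_to n i k" for k xs
    using that by (intro trail_gcd_eq trails_from_to_edges_ne[of xs n i k]) auto
  then have "(\<Union>k\<in>{1..i-1}. trail_gcd p c ` trails_from_to n i k) =
        (\<lambda>e. int p ^ e) ` back_bottlenecks n c i"
    unfolding back_bottlenecks_def by (auto simp: image_iff) blast+
  then show ?thesis
    unfolding lcm_trail_gcds_def using finite_back_bottlenecks back_bottlenecks_nonempty[OF i]
    by (simp add: Lcm_int_power_image)
qed

lemma a_exp_eq: "i \<in> {2..n} \<Longrightarrow> a_exp p n c i = Max (back_bottlenecks n c i)"
  using prime unfolding a_exp_def by (simp add: lcm_trail_gcds_eq prime_imp_prime_elem)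

lemma bottleneck_le_a_exp:
  "i \<in> {2..n} \<Longrightarrow> k \<in> {1..i-1} \<Longrightarrow> xs \<in> trails_from_to n i k \<Longrightarrow> bottleneck c xs \<le> a_exp p n c i"
  using finite_back_bottlenecks by (auto simp: a_exp_eq back_bottlenecks_def intro!: Max_ge)

lemma a_exp_attained:
  assumes "i \<in> {2..n}"
  obtains k xs where "k \<in> {1..i-1}" "xs \<in> trails_from_to n i k" "bottleneck c xs = a_exp p n c i"
  using Max_in[OF finite_back_bottlenecks back_bottlenecks_nonempty[OF assms]] a_exp_eq[OF assms] that
  unfolding back_bottlenecks_def by auto

lemma a_exp_less: "i \<in> {2..n} \<Longrightarrow> a_exp p n c i < t"
  using Max_in[OF finite_back_bottlenecks back_bottlenecks_nonempty] back_bottlenecks_less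
  by (force simp: a_exp_eq)

lemma a_exp_power_less: "i \<in> {2..n} \<Longrightarrow> int p ^ a_exp p n c i < int p ^ t"
  using p_gt_1 a_exp_less by (intro power_strict_increasing) auto

lemma V_set_memD: "v \<in> V_set n c j b \<Longrightarrow> v = j \<or> (j \<le> v \<and> v \<le> n)"
  unfolding V_set_def mem_Collect_eq by (induction rule: rtranclp_induct) auto

lemma V_set_self: "j \<in> V_set n c j b"
  by (simp add: V_set_def)

lemma label_leaving_component_le:
  assumes i: "i \<in> {2..n}" and u: "u \<in> V_set n c i (a_exp p n c i + 1)"
    and w: "w \<in> {1..n}" "w \<notin> V_set n c i (a_exp p n c i + 1)" and "u \<noteq> w"
  shows "c u w \<le> a_exp p n c i"
proof -
  let ?a = "a_exp p n c i"
  let ?R = "\<lambda>u w. i \<le> u \<and> u \<le> n \<and> i \<le> w \<and> w \<le> n \<and> u \<noteq> w \<and> ?a + 1 \<le> c u w"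
  have reach_u: "?R\<^sup>*\<^sup>* i u"
    using u by (simp add: V_set_def)
  show ?thesis
  proof (cases "i \<le> w")
    case True
    have "i \<le> u" "u \<le> n"
      using V_set_memD[OF u] i by auto
    then have "\<not> ?R u w"
      using reach_u w(2) rtranclp.rtrancl_into_rtrancl[of ?R i u w] by (auto simp: V_set_def)
    then show ?thesis
      using True w(1) \<open>u \<noteq> w\<close> \<open>i \<le> u\<close> \<open>u \<le> n\<close> by auto
  next
    case False
    obtain ys where ys: "ys \<noteq> []" "distinct ys" "hd ys = i" "last ys = u"
      "set ys \<subseteq> V_set n c i (?a + 1)" "\<forall>(x, y)\<in>set (trail_edges ys). ?R x y"
      using rtranclp_imp_distinct_path[OF reach_u] unfolding V_set_def by blast
    have "set ys \<subseteq> {1..n}"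
      using ys(5) V_set_memD i by fastforce
    then have "ys @ [w] \<in> trails_from_to n i w"
      using ys(1-3,5) w by (auto simp: trails_from_to_def intro!: distinct_is_trail)
    then have "bottleneck c (ys @ [w]) \<le> ?a"
      using False w(1) by (intro bottleneck_le_a_exp[OF i]) auto
    moreover have "min (?a + 1) (c u w) \<le> bottleneck c (ys @ [w])"
      using ys(6) by (subst le_bottleneck_iff) (auto simp: trail_edges_snoc[OF ys(1)] ys(4))
    ultimately show ?thesis
      by linarith
  qed
qed

lemma F_vec_diff_dvd:
  assumes i: "i \<in> {2..n}" and uw: "u \<in> {1..n}" "w \<in> {1..n}" "u \<noteq> w"
  shows "int p ^ c u w dvd F_vec p n c i u - F_vec p n c i w"
proof -
  let ?V = "V_set n c i (a_exp p n c i + 1)"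
  have "c u w \<le> a_exp p n c i" if "u \<in> ?V \<longleftrightarrow> w \<notin> ?V"
    using that label_leaving_component_le[OF i _ uw(2) _ uw(3)]
      label_leaving_component_le[OF i _ uw(1) _ uw(3)[symmetric]] edge_label[OF uw]
    by (cases "u \<in> ?V") auto
  then show ?thesis
    by (cases "u \<in> ?V"; cases "w \<in> ?V") (auto simp: F_vec_def le_imp_power_dvd)
qed

lemma F_vec_is_spline:
  assumes i: "i \<in> {2..n}"
  shows "is_spline p t n c (F_vec p n c i)"
proof -
  have "int p ^ a_exp p n c i < int p ^ t"
    using a_exp_power_less[OF i] .
  moreover have "v \<notin> V_set n c i (a_exp p n c i + 1)" if "v \<notin> {1..n}" for v
    using V_set_memD[of v i] i that by auto
  ultimately have "zmod_vec (int p ^ t) n (F_vec p n c i)"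
    using p_gt_1 by (auto simp: zmod_vec_def F_vec_def)
  then show ?thesis
    unfolding is_spline_iff int_spline_def using F_vec_diff_dvd[OF i] by blast
qed

lemma F_vec_is_flow_up:
  assumes i: "i \<in> {2..n}"
  shows "is_flow_up p t n c i (F_vec p n c i)" "F_vec p n c i i = int p ^ a_exp p n c i"
proof -
  show Fi: "F_vec p n c i i = int p ^ a_exp p n c i"
    by (simp add: F_vec_def V_set_self)
  have "\<not> [F_vec p n c i i = 0] (mod int p ^ t)"
    unfolding Fi cong_0_iff using a_exp_power_less[OF i] p_gt_1 zdvd_imp_le by fastforce
  moreover have "F_vec p n c i s = 0" if "s < i" for s
    using V_set_memD[of s i] that by (auto simp: F_vec_def)
  ultimately show "is_flow_up p t n c i (F_vec p n c i)"
    unfolding is_flow_up_def using F_vec_is_spline[OF i] by auto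
qed

lemma a_exp_dvd_flow_value:
  assumes i: "i \<in> {2..n}" and f: "int_spline p n c f"
    and zero: "\<forall>s\<in>{1..i-1}. int p ^ t dvd f s"
  shows "int p ^ a_exp p n c i dvd f i"
proof -
  obtain k xs where k: "k \<in> {1..i-1}" and xs: "xs \<in> trails_from_to n i k"
    and bn: "bottleneck c xs = a_exp p n c i"
    using a_exp_attained[OF i] .
  have tr: "is_trail n xs" "xs \<noteq> []" "hd xs = i" "last xs = k"
    using xs by (auto simp: trails_from_to_def is_trail_def)
  have "\<forall>(x, y)\<in>set (trail_edges xs). x \<in> {1..n} \<and> y \<in> {1..n} \<and> x \<noteq> y \<and> a_exp p n c i \<le> c x y"
    using is_trail_edgeD[OF tr(1)] bottleneck_le[of _ _ xs c] bn by auto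
  then have "int p ^ a_exp p n c i dvd f i - f k"
    using int_spline_dvd_along_walk[OF f tr(2)] tr(3,4) by simp
  moreover have "int p ^ a_exp p n c i dvd f k"
    using zero k a_exp_less[OF i] by (meson dvd_trans le_imp_power_dvd less_imp_le)
  ultimately show ?thesis
    by (metis diff_add_cancel dvd_add)
qed

lemma flow_up_basis_is_spline:
  assumes "j < n"
  shows "is_spline p t n c (flow_up_basis p n c j)"
proof (cases "j = 0")
  case True
  have "1 < int p ^ t"
    using p_gt_1 t_pos by (intro one_less_power) auto
  then show ?thesis
    using True by (auto simp: is_spline_iff zmod_vec_def int_spline_def flow_up_basis_def)
next
  case False
  then have "flow_up_basis p n c j = F_vec p n c (Suc j)"
    by (simp add: fun_eq_iff flow_up_basis_def)
  then show ?thesis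
    using False assms F_vec_is_spline[of "Suc j"] by simp
qed

lemma generates_splines_flow_up_basis: "generates_splines p t n c n (flow_up_basis p n c)"
proof -
  let ?g = "flow_up_basis p n c"
  have "\<exists>a. \<forall>v\<in>{1..n}. [f v = (\<Sum>j<n. a j * ?g j v)] (mod int p ^ t)"
    if "is_spline p t n c f" for f
  proof (rule triangular_family_spans[where P = "int_spline p n c"])
    show "int_spline p n c (\<lambda>v. f v - r * ?g j v)" if "int_spline p n c f" "j < n" for f r j
      using that flow_up_basis_is_spline is_spline_iff int_spline_diff by blast
    show "?g j s = 0" if "j < n" "1 \<le> s" "s \<le> j" for j s
      using that V_set_memD[of s "Suc j"] by (auto simp: flow_up_basis_def F_vec_def)
    show "\<exists>r. int p ^ t dvd f (Suc j) - r * ?g j (Suc j)"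
      if f: "int_spline p n c f" and j: "j < n" and zero: "\<forall>s\<in>{1..j}. int p ^ t dvd f s" for f j
    proof (cases "j = 0")
      case True
      then show ?thesis
        using j by (intro exI[of _ "f 1"]) (simp add: flow_up_basis_def)
    next
      case False
      then have "Suc j \<in> {2..n}"
        using j by auto
      then have "?g j (Suc j) dvd f (Suc j)"
        using False zero F_vec_is_flow_up(2) a_exp_dvd_flow_value[OF _ f]
        by (simp add: flow_up_basis_def)
      then obtain r where "f (Suc j) = ?g j (Suc j) * r" ..
      then show ?thesis
        by (intro exI[of _ r]) (simp add: mult.commute)
    qed
    show "int_spline p n c f"
      using that is_spline_iff by blast
  qed
  then show ?thesis
    using flow_up_basis_is_spline by (simp add: generates_splines_def splines_def)
qed

lemma generates_splines_imp_ge: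
  assumes gen: "generates_splines p t n c k g"
  shows "n \<le> k"
proof (rule ccontr)
  assume "\<not> n \<le> k"
  then have "k < n" by simp
  define q where "q = int p ^ (t - 1)"
  have pt: "int p ^ t = q * int p"
    using t_pos by (cases t) (simp_all add: q_def power_Suc2)
  have q: "0 < q" "q < int p ^ t"
    using p_gt_1 t_pos by (auto simp: q_def intro: power_strict_increasing)
  define h where "h r v = (if v = r then q else 0)" for r v :: nat
  have "h r \<in> splines p t n c" if "r \<in> {1..n}" for r
  proof -
    have "int p ^ c u w dvd q" if "u \<in> {1..n}" "w \<in> {1..n}" "u \<noteq> w" for u w
      using edge_label[OF that] unfolding q_def by (intro le_imp_power_dvd) linarith
    then show ?thesis
      using that q p_gt_1 by (auto simp: splines_def is_spline_iff zmod_vec_def int_spline_def h_def)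
  qed
  then have "\<forall>r\<in>{1..n}. \<exists>a. \<forall>v\<in>{1..n}. [h r v = (\<Sum>j<k. a j * g j v)] (mod int p ^ t)"
    using gen unfolding generates_splines_def by blast
  then obtain a where a: "\<And>r v. r \<in> {1..n} \<Longrightarrow> v \<in> {1..n} \<Longrightarrow>
      [h r v = (\<Sum>j<k. a r j * g j v)] (mod int p ^ t)"
    by metis
  define A where "A = mat n k (\<lambda>(r, j). a (Suc r) j)"
  define G where "G = mat k n (\<lambda>(j, w). g j (Suc w))"
  have A: "A \<in> carrier_mat n k" and G: "G \<in> carrier_mat k n"
    by (simp_all add: A_def G_def)
  have AG: "[(A * G) $$ (r, w) = (if r = w then q else 0)] (mod q * int p)"
    if "r < n" "w < n" for r w
  proof -
    have "(A * G) $$ (r, w) = (\<Sum>j<k. a (Suc r) j * g j (Suc w))"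
      using that by (simp add: A_def G_def scalar_prod_def atLeast0LessThan)
    moreover have "h (Suc r) (Suc w) = (if r = w then q else 0)"
      by (auto simp: h_def)
    ultimately show ?thesis
      using cong_sym[OF a[of "Suc r" "Suc w"]] that by (simp add: pt)
  qed
  have "A * G \<in> carrier_mat n n" "q \<noteq> 0" "int p > 1"
    using A G q(1) p_gt_1 by auto
  then have "det (A * G) \<noteq> 0"
    using AG by (rule det_ne_0_if_cong_scaled_one)
  then show False
    using det_mult_through_smaller_dim[OF A G \<open>k < n\<close>] by simp
qed

lemma spline_rank_eq: "spline_rank p t n c = n"
  unfolding spline_rank_def
  using generates_splines_flow_up_basis generates_splines_imp_ge by (intro Least_equality) blast+

end

theorem mainTheorem9:
  fixes p t n :: nat and c :: "nat \<Rightarrow> nat \<Rightarrow> nat"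
  assumes "prime p" and "t \<ge> 1" and "valid_labeling n t c"
  shows "(\<forall>i\<in>{2..n}.
            int p ^ a_exp p n c i = lcm_trail_gcds p n c i \<and>
            is_flow_up p t n c i (F_vec p n c i) \<and>
            F_vec p n c i i = int p ^ a_exp p n c i)
         \<and> spline_rank p t n c = n"
proof -
  interpret labeled_complete_graph p t n c
    using assms by unfold_locales
  show ?thesis
    using lcm_trail_gcds_eq a_exp_eq F_vec_is_flow_up spline_rank_eq by simp
qed

end
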